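(* Let $n\ge2$, $\rho\in(0,\infty)$, let $\Omega$ be as below, and let $b$ be a multiple of a $(\varphi,\infty,s)$-atom associated with the ball $B_r=\{|x|<r\}$, $r>0$. Then for every $R\in[2r,\infty)$ and every $x\in B_{2R}\setminus B_R$, $$\mu^\rho_\Omega(b)(x)\le\|\Omega\|_{L^1(S^{n-1})}\|b\|_{L^\infty}\frac{1}{\rho}\Big\{\ln\frac{2R+r}{R-r}+\frac{[(2R+r)^\rho-(R-r)^\rho]^2}{2\rho(2R+r)^{2\rho}}\Big\}^{1/2}.$$
   Context: $B_r:=\{x\in\mathbb{R}^n:|x|<r\}$. $\Omega$ is a locally integrable function on $\mathbb{R}^n\setminus\{0\}$, homogeneous of degree zero, with $\int_{S^{n-1}}\Omega\,d\sigma=0$. $\mu^\rho_\Omega(f)(x):=\big(\int_0^\infty|F^\rho_{\Omega,t}(f)(x)|^2\,t^{-2\rho-1}dt\big)^{1/2}$, $F^\rho_{\Omega,t}(f)(x):=\int_{|x-y|\le t}\Omega(x-y)|x-y|^{\rho-n}f(y)\,dy$. $\varphi$ is a growth function: $\varphi:\mathbb{R}^n\times[0,\infty)\to[0,\infty)$, each $\varphi(x,\cdot)$ an Orlicz function, each $\varphi(\cdot,t)$ measurable, $\varphi$ in the uniform Muckenhoupt class $\mathbb{A}_\infty$ (i.e. $\varphi(\cdot,t)$ is an $A_q$ weight for some $q$ with constants uniform in $t>0$), of uniformly lower type $p$ for some $p\in(0,1]$ and uniformly upper type 1 ($\varphi(x,st)\le Cs^p\varphi(x,t)$ for $s\le1$,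 $\varphi(x,st)\le Cs\varphi(x,t)$ for $s\ge1$). $(\varphi,\infty,s)$ is an admissible triplet ($s\in\mathbb{N}$ at least the critical index $m(\varphi)$). A $(\varphi,\infty,s)$-atom associated with a ball $B$ is a measurable $a$ supported in $B$ with $\|a\|_{L^\infty}\le\|\chi_B\|_{L^\varphi}^{-1}$ and $\int a(x)x^\gamma dx=0$ for all $|\gamma|\le s$, where $\|f\|_{L^\varphi}:=\inf\{\lambda>0:\int\varphi(x,|f(x)|/\lambda)dx\le1\}$; a multiple of an atom is $ca$ for a constant $c$. *)

theory Defs
  imports "HOL-Analysis.Analysis"
begin

definition sphere_cone :: "'a::euclidean_space set \<Rightarrow> 'a set" where
  "sphere_cone A = {x. x \<noteq> 0 \<and> norm x \<le> 1 \<and> x /\<^sub>R norm x \<in> A}"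

text \<open>Standard surface measure sigma on S^{n-1}: sigma(A) = n * |cone(A)|.\<close>
definition sphere_measure :: "'a::euclidean_space measure" where
  "sphere_measure = measure_of (sphere 0 1)
     {A. A \<subseteq> sphere 0 1 \<and> sphere_cone A \<in> sets lebesgue}
     (\<lambda>A. ennreal (real DIM('a)) * emeasure lebesgue (sphere_cone A))"

definition locally_integrable_punctured :: "('a::euclidean_space \<Rightarrow> real) \<Rightarrow> bool" where
  "locally_integrable_punctured \<Omega> \<longleftrightarrow>
     (\<forall>K. compact K \<and> 0 \<notin> K \<longrightarrow> set_integrable lebesgue K \<Omega>)"

definition homogeneous_deg0 :: "('a::real_normed_vector \<Rightarrow> real) \<Rightarrow> bool" where
  "homogeneous_deg0 \<Omega> \<longleftrightarrow> (\<forall>x t. x \<noteq> 0 \<and> t > 0 \<longrightarrow> \<Omega> (t *\<^sub>R x) = \<Omega> x)"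

definition L1_sphere_norm :: "('a::euclidean_space \<Rightarrow> real) \<Rightarrow> real" where
  "L1_sphere_norm \<Omega> = integral\<^sup>L sphere_measure (\<lambda>x. \<bar>\<Omega> x\<bar>)"

definition F_rho :: "real \<Rightarrow> ('a::euclidean_space \<Rightarrow> real) \<Rightarrow> ('a \<Rightarrow> real) \<Rightarrow> real \<Rightarrow> 'a \<Rightarrow> real" where
  "F_rho \<rho> \<Omega> f t x =
     (LINT y : cball x t | lebesgue. \<Omega> (x - y) * norm (x - y) powr (\<rho> - real DIM('a)) * f y)"

definition mu_rho :: "real \<Rightarrow> ('a::euclidean_space \<Rightarrow> real) \<Rightarrow> ('a \<Rightarrow> real) \<Rightarrow> 'a \<Rightarrow> ennreal" where
  "mu_rho \<rho> \<Omega> f x =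
     (let I = (\<integral>\<^sup>+ t \<in> {0<..}. ennreal ((F_rho \<rho> \<Omega> f t x)\<^sup>2 * t powr (- 2 * \<rho> - 1)) \<partial>lborel)
      in if I = \<infinity> then \<infinity> else ennreal (sqrt (enn2real I)))"

definition orlicz_function :: "(real \<Rightarrow> real) \<Rightarrow> bool" where
  "orlicz_function \<Phi> \<longleftrightarrow>
     (\<forall>t\<ge>0. \<Phi> t \<ge> 0) \<and> mono_on {0..} \<Phi> \<and> \<Phi> 0 = 0 \<and> (\<forall>t>0. \<Phi> t > 0) \<and>
     filterlim \<Phi> at_top at_top"

definition musielak_orlicz :: "('a::euclidean_space \<Rightarrow> real \<Rightarrow> real) \<Rightarrow> bool" where
  "musielak_orlicz \<phi> \<longleftrightarrow>
     (\<forall>x. orlicz_function (\<phi> x)) \<and> (\<forall>t\<ge>0. (\<lambda>x. \<phi> x t) \<in> borel_measurable lebesgue)"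

definition uniform_Aq :: "('a::euclidean_space \<Rightarrow> real \<Rightarrow> real) \<Rightarrow> real \<Rightarrow> bool" where
  "uniform_Aq \<phi> q \<longleftrightarrow>
    (if q = 1 then
       (\<exists>C::real. \<forall>t>0. \<forall>c r. r > 0 \<longrightarrow>
          (AE y in lebesgue. y \<in> ball c r \<longrightarrow>
             (1 / emeasure lebesgue (ball c r)) * (\<integral>\<^sup>+ x \<in> ball c r. ennreal (\<phi> x t) \<partial>lebesgue)
               \<le> ennreal (C * \<phi> y t)))
     else q > 1 \<and>
       (\<exists>C::real. \<forall>t>0. \<forall>c r. r > 0 \<longrightarrow>
          (let A = (1 / emeasure lebesgue (ball c r)) *
                     (\<integral>\<^sup>+ x \<in> ball c r. ennreal (\<phi> x t) \<partial>lebesgue);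
               A' = (1 / emeasure lebesgue (ball c r)) *
                     (\<integral>\<^sup>+ y \<in> ball c r. ennreal (\<phi> y t powr (- 1 / (q - 1))) \<partial>lebesgue)
           in A < \<infinity> \<and> A' < \<infinity> \<and> enn2real A * enn2real A' powr (q - 1) \<le> C)))"

definition uniform_A_infty :: "('a::euclidean_space \<Rightarrow> real \<Rightarrow> real) \<Rightarrow> bool" where
  "uniform_A_infty \<phi> \<longleftrightarrow> (\<exists>q\<ge>1. uniform_Aq \<phi> q)"

definition uniformly_lower_type :: "('a \<Rightarrow> real \<Rightarrow> real) \<Rightarrow> real \<Rightarrow> bool" where
  "uniformly_lower_type \<phi> p \<longleftrightarrow>
     (\<exists>C>0. \<forall>x t s. t \<ge> 0 \<and> 0 < s \<and> s \<le> 1 \<longrightarrow> \<phi> x (s * t) \<le> C * s powr p * \<phi> x t)"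

definition uniformly_upper_type :: "('a \<Rightarrow> real \<Rightarrow> real) \<Rightarrow> real \<Rightarrow> bool" where
  "uniformly_upper_type \<phi> p \<longleftrightarrow>
     (\<exists>C>0. \<forall>x t s. t \<ge> 0 \<and> s \<ge> 1 \<longrightarrow> \<phi> x (s * t) \<le> C * s powr p * \<phi> x t)"

definition growth_function :: "('a::euclidean_space \<Rightarrow> real \<Rightarrow> real) \<Rightarrow> bool" where
  "growth_function \<phi> \<longleftrightarrow>
     musielak_orlicz \<phi> \<and> uniform_A_infty \<phi> \<and>
     (\<exists>p. 0 < p \<and> p \<le> 1 \<and> uniformly_lower_type \<phi> p) \<and> uniformly_upper_type \<phi> 1"

definition q_index :: "('a::euclidean_space \<Rightarrow> real \<Rightarrow> real) \<Rightarrow> real" where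
  "q_index \<phi> = Inf {q. q \<ge> 1 \<and> uniform_Aq \<phi> q}"

definition i_index :: "('a \<Rightarrow> real \<Rightarrow> real) \<Rightarrow> real" where
  "i_index \<phi> = Sup {p. 0 < p \<and> p \<le> 1 \<and> uniformly_lower_type \<phi> p}"

definition m_index :: "('a::euclidean_space \<Rightarrow> real \<Rightarrow> real) \<Rightarrow> int" where
  "m_index \<phi> = \<lfloor>real DIM('a) * (q_index \<phi> / i_index \<phi> - 1)\<rfloor>"

text \<open>(phi, infinity, s) admissible: s a nonnegative integer with s >= m(phi)
  (the condition q in (q(phi), infinity] is automatic for q = infinity).\<close>
definition admissible_infty :: "('a::euclidean_space \<Rightarrow> real \<Rightarrow> real) \<Rightarrow> nat \<Rightarrow> bool" where
  "admissible_infty \<phi> s \<longleftrightarrow> growth_function \<phi> \<and> int s \<ge> m_index \<phi>"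

definition L_phi_norm :: "('a::euclidean_space \<Rightarrow> real \<Rightarrow> real) \<Rightarrow> ('a \<Rightarrow> real) \<Rightarrow> real" where
  "L_phi_norm \<phi> f =
     Inf {l. l > 0 \<and> (\<integral>\<^sup>+ x. ennreal (\<phi> x (\<bar>f x\<bar> / l)) \<partial>lebesgue) \<le> 1}"

definition Linf_norm :: "('a::euclidean_space \<Rightarrow> real) \<Rightarrow> real" where
  "Linf_norm f = Inf {C. C \<ge> 0 \<and> (AE x in lebesgue. \<bar>f x\<bar> \<le> C)}"

definition monomial :: "('a::euclidean_space \<Rightarrow> nat) \<Rightarrow> 'a \<Rightarrow> real" where
  "monomial \<gamma> x = (\<Prod>i\<in>Basis. (x \<bullet> i) ^ \<gamma> i)"

definition phi_atom ::
  "('a::euclidean_space \<Rightarrow> real \<Rightarrow> real) \<Rightarrow> nat \<Rightarrow> 'a set \<Rightarrow> ('a \<Rightarrow> real) \<Rightarrow> bool" where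
  "phi_atom \<phi> s B a \<longleftrightarrow>
     a \<in> borel_measurable lebesgue \<and>
     (\<forall>x. x \<notin> B \<longrightarrow> a x = 0) \<and>
     (AE x in lebesgue. \<bar>a x\<bar> \<le> 1 / L_phi_norm \<phi> (indicator B)) \<and>
     (\<forall>\<gamma>::'a \<Rightarrow> nat. (\<Sum>i\<in>Basis. \<gamma> i) \<le> s \<longrightarrow>
        (\<integral>x. a x * monomial \<gamma> x \<partial>lebesgue) = 0)"

definition multiple_of_phi_atom ::
  "('a::euclidean_space \<Rightarrow> real \<Rightarrow> real) \<Rightarrow> nat \<Rightarrow> 'a set \<Rightarrow> ('a \<Rightarrow> real) \<Rightarrow> bool" where
  "multiple_of_phi_atom \<phi> s B b \<longleftrightarrow> (\<exists>c a. phi_atom \<phi> s B a \<and> b = (\<lambda>x. c * a x))"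

end

theory Submission
  imports Defs
begin

text \<open>
  Only the support and the size of the atom enter. For y \<in> B_r and R \<le> |x| < 2R we have
  R - r < |x - y| < 2R + r, so |F_t(b)(x)| is at most \<parallel>b\<parallel>_\<infinity> times the integral of
  |\<Omega>(z)| |z|^(\<rho>-n) over the shell R - r < |z| \<le> min t (2R + r). For \<Omega> homogeneous of degree
  zero, scaling shows that the mass of |\<Omega>| on the shell a < |z| \<le> c is
  (c^n - a^n) \<parallel>\<Omega>\<parallel>_L1(S^(n-1)) / n; so the radial distribution of |\<Omega>(z)| dz is
  \<parallel>\<Omega>\<parallel>_1 s^(n-1) ds, and the shell integral equals \<parallel>\<Omega>\<parallel>_1 ((min t (2R+r))^\<rho> - (R-r)^\<rho>) / \<rho>.
  Squaring and integrating against t^(-2\<rho>-1) dt gives a logarithm from R - r < t \<le> 2R + r and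
  a convergent power tail from t > 2R + r.
\<close>

lemma nn_integral_lebesgue_affine:
  fixes f :: "'a::euclidean_space \<Rightarrow> ennreal"
  assumes f[measurable]: "f \<in> borel_measurable lebesgue" and c: "c \<noteq> 0"
  shows "(\<integral>\<^sup>+x. f x \<partial>lebesgue) = ennreal (\<bar>c\<bar> ^ DIM('a)) * (\<integral>\<^sup>+x. f (t + c *\<^sub>R x) \<partial>lebesgue)"
proof -
  have T: "(\<lambda>x. t + (\<Sum>j\<in>Basis. (c * (x \<bullet> j)) *\<^sub>R j)) = (\<lambda>x::'a. t + c *\<^sub>R x)"
    unfolding scaleR_scaleR[symmetric] scaleR_sum_right[symmetric] euclidean_representation ..
  have L: "lebesgue = density (distr lebesgue lebesgue (\<lambda>x::'a. t + c *\<^sub>R x)) (\<lambda>_. ennreal (\<bar>c\<bar> ^ DIM('a)))"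
    using lebesgue_affine_euclidean[of "\<lambda>_. c" t] c unfolding T by (simp add: prod_constant)
  have meas: "(\<lambda>x::'a. t + c *\<^sub>R x) \<in> lebesgue \<rightarrow>\<^sub>M lebesgue"
    using lebesgue_affine_measurable[of "\<lambda>_. c" t] c unfolding T by simp
  have "(\<integral>\<^sup>+x. f x \<partial>lebesgue) = (\<integral>\<^sup>+x. ennreal (\<bar>c\<bar> ^ DIM('a)) * f x \<partial>distr lebesgue lebesgue (\<lambda>x. t + c *\<^sub>R x))"
    by (subst L) (simp add: nn_integral_density)
  also have "\<dots> = ennreal (\<bar>c\<bar> ^ DIM('a)) * (\<integral>\<^sup>+x. f (t + c *\<^sub>R x) \<partial>lebesgue)"
    using meas by (simp add: nn_integral_cmult nn_integral_distr)
  finally show ?thesis .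
qed

lemma nn_integral_FTC_Ioc:
  fixes f F :: "real \<Rightarrow> real"
  assumes "a \<le> b"
    and "\<And>x. x \<in> {a..b} \<Longrightarrow> (F has_real_derivative f x) (at x within {a..b})"
    and "\<And>x. x \<in> {a..b} \<Longrightarrow> 0 \<le> f x"
  shows "(\<integral>\<^sup>+x. ennreal (f x) * indicator {a<..b} x \<partial>lborel) = ennreal (F b - F a)"
proof -
  have "(f has_integral (F b - F a)) {a..b}"
    using fundamental_theorem_of_calculus[of a b F f] assms
    by (simp add: has_real_derivative_iff_has_vector_derivative)
  then have "(\<integral>\<^sup>+x. ennreal (f x) * indicator {a..b} x \<partial>lborel) = ennreal (F b - F a)"
    using assms(3) by (intro nn_integral_has_integral_lebesgue') auto
  moreover have "(\<integral>\<^sup>+x. ennreal (f x) * indicator {a<..b} x \<partial>lborel) =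
      (\<integral>\<^sup>+x. ennreal (f x) * indicator {a..b} x \<partial>lborel)"
    by (intro nn_integral_cong_AE)
      (use AE_lborel_singleton[of a] in \<open>eventually_elim, auto simp: indicator_def\<close>)
  ultimately show ?thesis by simp
qed

lemma nn_integral_inverse_Ioc:
  assumes "0 < a" "a \<le> c"
  shows "(\<integral>\<^sup>+t. ennreal (1 / t) * indicator {a<..c} t \<partial>lborel) = ennreal (ln c - ln a)"
  by (rule nn_integral_FTC_Ioc) (use assms in \<open>auto intro!: derivative_eq_intros\<close>)

lemma nn_integral_powr_Ioi:
  assumes c: "0 < c" and p: "0 < p"
  shows "(\<integral>\<^sup>+t. ennreal (t powr (- p - 1)) * indicator {c<..} t \<partial>lborel) = ennreal (c powr (- p) / p)"
proof -
  have "(\<integral>\<^sup>+t. ennreal (t powr (- p - 1)) * indicator {c<..} t \<partial>lborel) =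
      (\<integral>\<^sup>+t. ennreal (t powr (- p - 1)) * indicator {c..} t \<partial>lborel)"
    by (intro nn_integral_cong_AE)
      (use AE_lborel_singleton[of c] in \<open>eventually_elim, auto simp: indicator_def\<close>)
  also have "\<dots> = ennreal (0 - (- (c powr (- p) / p)))"
  proof (rule nn_integral_FTC_atLeast)
    fix t assume "c \<le> t"
    with c p show "((\<lambda>t. - (t powr (- p) / p)) has_real_derivative t powr (- p - 1)) (at t)"
      by (auto intro!: derivative_eq_intros simp: field_simps)
  next
    have "((\<lambda>t::real. t powr (- p)) \<longlongrightarrow> 0) at_top"
      using p by (intro tendsto_neg_powr filterlim_ident) auto
    then have "((\<lambda>t. - (t powr (- p) / p)) \<longlongrightarrow> - (0 / p)) at_top"
      by (intro tendsto_minus tendsto_divide tendsto_const) (use p in auto)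
    then show "((\<lambda>t. - (t powr (- p) / p)) \<longlongrightarrow> 0) at_top" by simp
  qed auto
  finally show ?thesis by simp
qed

section \<open>Surface measure on the unit sphere in polar form\<close>

definition shell :: "real \<Rightarrow> real \<Rightarrow> 'a::real_normed_vector set" where
  "shell a b = {z. a < norm z \<and> norm z \<le> b}"

lemma shell_empty: "b \<le> a \<Longrightarrow> shell a b = {}"
  by (auto simp: shell_def)

lemma shell_antimono: "a' \<le> a \<Longrightarrow> shell a b \<subseteq> shell a' b"
  by (auto simp: shell_def)

lemma sets_lebesgue_shell[measurable]: "shell a b \<in> sets (lebesgue :: 'a::euclidean_space measure)"
proof -
  have "shell a b = {z::'a. a < norm z} \<inter> cball 0 b" by (auto simp: shell_def)
  moreover have "{z::'a. a < norm z} \<inter> cball 0 b \<in> sets borel"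
    by (intro sets.Int borel_open borel_closed open_Collect_less) (auto intro: continuous_intros)
  ultimately show ?thesis by (auto intro: sets_completionI_sets)
qed

definition sphere_sets :: "'a::euclidean_space set set" where
  "sphere_sets = {A. A \<subseteq> sphere 0 1 \<and> sphere_cone A \<in> sets lebesgue}"

lemma sigma_algebra_sphere_sets: "sigma_algebra (sphere (0::'a::euclidean_space) 1) sphere_sets"
  unfolding sigma_algebra_iff2
proof (intro conjI ballI allI impI)
  show "sphere_sets \<subseteq> Pow (sphere (0::'a) 1)" "{} \<in> (sphere_sets :: 'a set set)"
    by (auto simp: sphere_sets_def sphere_cone_def)
  fix A :: "'a set" assume "A \<in> sphere_sets"
  moreover have "sphere_cone (sphere 0 1 - A) = shell 0 1 - sphere_cone A" if "A \<subseteq> sphere 0 1"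
    using that by (auto simp: sphere_cone_def shell_def)
  ultimately show "sphere 0 1 - A \<in> sphere_sets"
    by (auto simp: sphere_sets_def)
next
  fix A :: "nat \<Rightarrow> 'a set" assume "range A \<subseteq> sphere_sets"
  moreover have "sphere_cone (\<Union>i. A i) = (\<Union>i. sphere_cone (A i))"
    by (auto simp: sphere_cone_def)
  ultimately show "(\<Union>i. A i) \<in> sphere_sets"
    by (auto simp: sphere_sets_def)
qed

lemma sets_sphere_measure: "sets (sphere_measure :: 'a::euclidean_space measure) = sphere_sets"
proof -
  interpret sigma_algebra "sphere (0::'a) 1" sphere_sets by (rule sigma_algebra_sphere_sets)
  have sub: "sphere_sets \<subseteq> Pow (sphere (0::'a) 1)" by (auto simp: sphere_sets_def)
  show ?thesis
    unfolding sphere_measure_def sphere_sets_def[symmetric] sets_measure_of[OF sub] sigma_sets_eq ..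
qed

lemma space_sphere_measure: "space (sphere_measure :: 'a::euclidean_space measure) = sphere 0 1"
  unfolding sphere_measure_def by (subst space_measure_of) auto

lemma emeasure_sphere_measure:
  assumes "A \<in> sphere_sets"
  shows "emeasure (sphere_measure :: 'a::euclidean_space measure) A =
    ennreal (real DIM('a)) * emeasure lebesgue (sphere_cone A)"
  unfolding sphere_measure_def sphere_sets_def[symmetric]
proof (rule emeasure_measure_of_sigma[OF sigma_algebra_sphere_sets _ _ assms])
  show "positive sphere_sets (\<lambda>A::'a set. ennreal (real DIM('a)) * emeasure lebesgue (sphere_cone A))"
    by (auto simp: positive_def sphere_cone_def)
  show "countably_additive sphere_sets
      (\<lambda>A::'a set. ennreal (real DIM('a)) * emeasure lebesgue (sphere_cone A))"
    unfolding countably_additive_def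
  proof (intro allI impI)
    fix A :: "nat \<Rightarrow> 'a set"
    assume A: "range A \<subseteq> sphere_sets" "disjoint_family A"
    have "disjoint_family (\<lambda>i. sphere_cone (A i))"
      using A(2) unfolding disjoint_family_on_def sphere_cone_def by blast
    moreover have "range (\<lambda>i. sphere_cone (A i)) \<subseteq> sets lebesgue"
      using A(1) by (auto simp: sphere_sets_def)
    ultimately have "(\<Sum>i. emeasure lebesgue (sphere_cone (A i))) =
        emeasure lebesgue (\<Union>i. sphere_cone (A i))"
      by (rule suminf_emeasure[rotated])
    moreover have "sphere_cone (\<Union>i. A i) = (\<Union>i. sphere_cone (A i))"
      by (auto simp: sphere_cone_def)
    ultimately show "(\<Sum>i. ennreal (real DIM('a)) * emeasure lebesgue (sphere_cone (A i))) =
        ennreal (real DIM('a)) * emeasure lebesgue (sphere_cone (\<Union> (range A)))"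
      by (simp add: ennreal_suminf_cmult)
  qed
qed

lemma measurable_radial_projection:
  "(\<lambda>z. z /\<^sub>R norm z) \<in> restrict_space lebesgue (shell 0 1) \<rightarrow>\<^sub>M (sphere_measure :: 'a::euclidean_space measure)"
proof (rule measurableI)
  fix A assume "A \<in> sets (sphere_measure :: 'a measure)"
  moreover have "(\<lambda>z. z /\<^sub>R norm z) -` A \<inter> shell 0 1 = sphere_cone A" if "A \<subseteq> sphere 0 1"
    using that by (auto simp: sphere_cone_def shell_def)
  ultimately show "(\<lambda>z. z /\<^sub>R norm z) -` A \<inter> space (restrict_space lebesgue (shell 0 1)) \<in>
      sets (restrict_space lebesgue (shell 0 1))"
    by (subst sets_restrict_space_iff) (auto simp: sets_sphere_measure sphere_sets_def)
qed (auto simp: shell_def space_sphere_measure)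

lemma sphere_measure_eq_density_distr:
  "(sphere_measure :: 'a::euclidean_space measure) =
    density (distr (restrict_space lebesgue (shell 0 1)) sphere_measure (\<lambda>z. z /\<^sub>R norm z))
      (\<lambda>_. ennreal (real DIM('a)))"
proof (rule measure_eqI)
  fix A assume A: "A \<in> sets (sphere_measure :: 'a measure)"
  have "emeasure (distr (restrict_space lebesgue (shell 0 1)) sphere_measure (\<lambda>z. z /\<^sub>R norm z)) A =
      emeasure (restrict_space lebesgue (shell 0 1)) ((\<lambda>z. z /\<^sub>R norm z) -` A \<inter> shell 0 1)"
    using emeasure_distr[OF measurable_radial_projection A] by simp
  also have "(\<lambda>z::'a. z /\<^sub>R norm z) -` A \<inter> shell 0 1 = sphere_cone A"
    using A by (auto simp: sphere_cone_def shell_def sets_sphere_measure sphere_sets_def)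
  also have "emeasure (restrict_space lebesgue (shell 0 1)) (sphere_cone A) = emeasure lebesgue (sphere_cone A)"
    by (rule emeasure_restrict_space) (auto simp: sphere_cone_def shell_def)
  finally show "emeasure sphere_measure A = emeasure (density (distr (restrict_space lebesgue (shell 0 1))
      sphere_measure (\<lambda>z. z /\<^sub>R norm z)) (\<lambda>_. ennreal (real DIM('a)))) A"
    using A emeasure_sphere_measure[of A]
    by (simp add: emeasure_density nn_integral_cmult_indicator sets_sphere_measure)
qed simp

lemma nn_integral_sphere_measure:
  assumes h: "h \<in> borel_measurable (sphere_measure :: 'a::euclidean_space measure)"
  shows "(\<integral>\<^sup>+x. h x \<partial>sphere_measure) =
    ennreal (real DIM('a)) * (\<integral>\<^sup>+z. h (z /\<^sub>R norm z) * indicator (shell 0 1) z \<partial>(lebesgue :: 'a measure))"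
proof -
  have "(\<integral>\<^sup>+x. h x \<partial>sphere_measure) = ennreal (real DIM('a)) *
      (\<integral>\<^sup>+x. h x \<partial>distr (restrict_space lebesgue (shell 0 1)) sphere_measure (\<lambda>z::'a. z /\<^sub>R norm z))"
    using h by (subst sphere_measure_eq_density_distr) (simp add: nn_integral_density nn_integral_cmult)
  also have "\<dots> = ennreal (real DIM('a)) *
      (\<integral>\<^sup>+z. h (z /\<^sub>R norm z) \<partial>restrict_space lebesgue (shell 0 1))"
    using h by (subst nn_integral_distr[OF measurable_radial_projection]) auto
  finally show ?thesis by (simp add: nn_integral_restrict_space)
qed

section \<open>Kernels homogeneous of degree zero\<close>

lemma borel_measurable_locally_integrable_punctured:
  fixes \<Omega> :: "'a::euclidean_space \<Rightarrow> real"
  assumes "locally_integrable_punctured \<Omega>"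
  shows "\<Omega> \<in> borel_measurable lebesgue"
proof -
  define A where "A k = cball (0::'a) (Suc k) - ball 0 (1 / Suc k)" for k :: nat
  have "compact (A k)" "0 \<notin> A k" for k unfolding A_def by (auto intro!: compact_diff)
  then have "set_integrable lebesgue (A k) \<Omega>" for k
    using assms unfolding locally_integrable_punctured_def by blast
  then have m: "(\<lambda>z. indicator (A k) z *\<^sub>R \<Omega> z) \<in> borel_measurable lebesgue" for k
    unfolding set_integrable_def by (rule borel_measurable_integrable)
  \<comment> \<open>the compact annuli A k exhaust the punctured space; the value at 0 is patched in separately\<close>
  define u where "u k z = indicator (A k) z *\<^sub>R \<Omega> z + indicator {0} z * \<Omega> 0" for k z
  have "u k \<in> borel_measurable lebesgue" for k
    unfolding u_def by (intro borel_measurable_add m borel_measurable_times borel_measurable_indicator) auto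
  moreover have "(\<lambda>k. u k z) \<longlonglongrightarrow> \<Omega> z" for z
  proof (cases "z = 0")
    case False
    obtain N1 :: nat where N1: "norm z \<le> N1" using real_arch_simple by blast
    obtain N2 :: nat where N2: "1 / norm z < N2" using reals_Archimedean2 by blast
    have "z \<in> A k" if "N1 + N2 \<le> k" for k
    proof -
      have "1 / norm z < Suc k" using N2 that by linarith
      then have "1 / Suc k \<le> norm z" using False by (simp add: field_simps)
      moreover have "norm z \<le> Suc k" using N1 that by linarith
      ultimately show ?thesis by (simp add: A_def)
    qed
    then have "\<forall>k\<ge>N1 + N2. u k z = \<Omega> z"
      using False by (simp add: u_def)
    then show ?thesis
      by (intro tendsto_eventually) (auto simp: eventually_sequentially)
  qed (simp add: u_def A_def)
  ultimately show ?thesis by (rule borel_measurable_LIMSEQ_real[rotated])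
qed

lemma homogeneous_deg0_normalize:
  assumes "homogeneous_deg0 \<Omega>" and "z \<noteq> 0"
  shows "\<Omega> (z /\<^sub>R norm z) = \<Omega> z"
  using assms unfolding homogeneous_deg0_def by simp

lemma borel_measurable_sphere_measure_homogeneous:
  fixes \<Omega> :: "'a::euclidean_space \<Rightarrow> real"
  assumes meas: "\<Omega> \<in> borel_measurable lebesgue" and hom: "homogeneous_deg0 \<Omega>"
  shows "\<Omega> \<in> borel_measurable sphere_measure"
proof (rule measurableI)
  fix A :: "real set" assume "A \<in> sets borel"
  then have "\<Omega> -` A \<inter> space lebesgue \<inter> shell 0 1 \<in> sets lebesgue"
    using meas by measurable
  moreover have "sphere_cone (\<Omega> -` A \<inter> sphere 0 1) = \<Omega> -` A \<inter> space lebesgue \<inter> shell 0 1"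
    using homogeneous_deg0_normalize[OF hom] by (auto simp: sphere_cone_def shell_def)
  ultimately show "\<Omega> -` A \<inter> space sphere_measure \<in> sets sphere_measure"
    by (auto simp: sets_sphere_measure sphere_sets_def space_sphere_measure)
qed simp

definition shell_mass :: "('a::euclidean_space \<Rightarrow> real) \<Rightarrow> real \<Rightarrow> real \<Rightarrow> ennreal" where
  "shell_mass \<Omega> a b = (\<integral>\<^sup>+z. ennreal \<bar>\<Omega> z\<bar> * indicator (shell a b) z \<partial>lebesgue)"

lemma shell_mass_empty: "b \<le> a \<Longrightarrow> shell_mass \<Omega> a b = 0"
  by (simp add: shell_mass_def shell_empty)

lemma shell_mass_scale:
  fixes \<Omega> :: "'a::euclidean_space \<Rightarrow> real"
  assumes hom: "homogeneous_deg0 \<Omega>" and [measurable]: "\<Omega> \<in> borel_measurable lebesgue"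
    and s: "0 < s" and a: "0 \<le> a"
  shows "shell_mass \<Omega> (s * a) (s * b) = ennreal (s ^ DIM('a)) * shell_mass \<Omega> a b"
proof -
  have "shell_mass \<Omega> (s * a) (s * b) = ennreal (\<bar>s\<bar> ^ DIM('a)) *
      (\<integral>\<^sup>+z. ennreal \<bar>\<Omega> (0 + s *\<^sub>R z)\<bar> * indicator (shell (s * a) (s * b)) (0 + s *\<^sub>R z) \<partial>lebesgue)"
    unfolding shell_mass_def using s by (intro nn_integral_lebesgue_affine) auto
  also have "(\<lambda>z. ennreal \<bar>\<Omega> (0 + s *\<^sub>R z)\<bar> * indicator (shell (s * a) (s * b)) (0 + s *\<^sub>R z)) =
      (\<lambda>z. ennreal \<bar>\<Omega> z\<bar> * indicator (shell a b) z)"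
  proof
    fix z :: 'a
    have "\<Omega> (s *\<^sub>R z) = \<Omega> z" if "z \<in> shell a b"
    proof -
      have "z \<noteq> 0" using that a by (auto simp: shell_def)
      then show ?thesis using hom s unfolding homogeneous_deg0_def by blast
    qed
    then show "ennreal \<bar>\<Omega> (0 + s *\<^sub>R z)\<bar> * indicator (shell (s * a) (s * b)) (0 + s *\<^sub>R z) =
        ennreal \<bar>\<Omega> z\<bar> * indicator (shell a b) z"
      using s by (auto simp: shell_def indicator_def)
  qed
  finally show ?thesis using s by (simp add: shell_mass_def)
qed

lemma shell_mass_split:
  fixes \<Omega> :: "'a::euclidean_space \<Rightarrow> real"
  assumes [measurable]: "\<Omega> \<in> borel_measurable lebesgue" and "a \<le> b" "b \<le> c"
  shows "shell_mass \<Omega> a c = shell_mass \<Omega> a b + shell_mass \<Omega> b c"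
proof -
  have "(\<lambda>z. ennreal \<bar>\<Omega> z\<bar> * indicator (shell a c) z) =
      (\<lambda>z. ennreal \<bar>\<Omega> z\<bar> * indicator (shell a b) z + ennreal \<bar>\<Omega> z\<bar> * indicator (shell b c) z)"
    using assms(2,3) by (auto simp: shell_def indicator_def fun_eq_iff)
  then show ?thesis unfolding shell_mass_def by (simp add: nn_integral_add)
qed

lemma shell_mass_dyadic_le:
  fixes \<Omega> :: "'a::euclidean_space \<Rightarrow> real"
  assumes hom: "homogeneous_deg0 \<Omega>" and meas: "\<Omega> \<in> borel_measurable lebesgue"
  shows "shell_mass \<Omega> ((1/2)^N) 1 \<le> 2 * shell_mass \<Omega> (1/2) 1"
proof (induction N)
  case (Suc N)
  have "ennreal ((1/2) ^ DIM('a)) \<le> ennreal ((1/2) ^ 1)"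
    by (intro ennreal_leI power_decreasing) (auto simp: DIM_positive Suc_leI)
  then have "ennreal ((1/2) ^ DIM('a)) * shell_mass \<Omega> ((1/2)^N) 1 \<le>
      ennreal (1/2) * (2 * shell_mass \<Omega> (1/2) 1)"
    using Suc.IH by (intro mult_mono) auto
  also have "\<dots> = shell_mass \<Omega> (1/2) 1"
  proof -
    have "ennreal (1/2) * 2 = 1"
      using ennreal_mult''[of "1/2" 2] by (simp add: mult.commute)
    then show ?thesis by (metis mult.assoc mult_1)
  qed
  finally have "ennreal ((1/2) ^ DIM('a)) * shell_mass \<Omega> ((1/2)^N) 1 \<le> shell_mass \<Omega> (1/2) 1" .
  moreover have "shell_mass \<Omega> ((1/2)^Suc N) 1 =
      ennreal ((1/2) ^ DIM('a)) * shell_mass \<Omega> ((1/2)^N) 1 + shell_mass \<Omega> (1/2) 1"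
    using shell_mass_split[OF meas, of "(1/2)^Suc N" "1/2" 1]
      shell_mass_scale[OF hom meas, of "1/2" "(1/2)^N" 1]
    by (simp add: power_le_one)
  ultimately show ?case by (metis add_right_mono mult_2)
qed (simp add: shell_mass_empty)

lemma shell_mass_dyadic_LIMSEQ:
  fixes \<Omega> :: "'a::euclidean_space \<Rightarrow> real"
  assumes [measurable]: "\<Omega> \<in> borel_measurable lebesgue"
  shows "(\<lambda>N. shell_mass \<Omega> ((1/2)^N) 1) \<longlonglongrightarrow> shell_mass \<Omega> 0 1"
  unfolding shell_mass_def
proof (rule nn_integral_LIMSEQ)
  show "incseq (\<lambda>N z. ennreal \<bar>\<Omega> z\<bar> * indicator (shell ((1/2)^N) 1) z)"
  proof (intro incseq_SucI le_funI)
    fix N z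
    have "(1/2::real)^Suc N \<le> (1/2)^N" by (rule power_decreasing) auto
    then have "shell ((1/2)^N) 1 \<subseteq> (shell ((1/2)^Suc N) 1 :: 'a set)"
      by (rule shell_antimono)
    then show "ennreal \<bar>\<Omega> z\<bar> * indicator (shell ((1/2)^N) 1) z \<le>
        ennreal \<bar>\<Omega> z\<bar> * indicator (shell ((1/2)^Suc N) 1) z"
      by (intro mult_left_mono indicator_leI) auto
  qed
  fix z :: 'a
  show "(\<lambda>N. ennreal \<bar>\<Omega> z\<bar> * indicator (shell ((1/2)^N) 1) z) \<longlonglongrightarrow>
      ennreal \<bar>\<Omega> z\<bar> * indicator (shell 0 1) z"
  proof (cases "z = 0")
    case False
    then obtain N0 where N0: "(1/2::real)^N0 < norm z"
      using real_arch_pow_inv[of "norm z" "1/2"] by auto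
    have "(1/2::real)^N < norm z" if "N0 \<le> N" for N
    proof -
      have "(1/2::real)^N \<le> (1/2)^N0" using that by (rule power_decreasing) auto
      then show ?thesis using N0 by linarith
    qed
    then have "\<forall>N\<ge>N0. ennreal \<bar>\<Omega> z\<bar> * indicator (shell ((1/2)^N) 1) z =
        ennreal \<bar>\<Omega> z\<bar> * indicator (shell 0 1) z"
      using False by (auto simp: shell_def indicator_def)
    then show ?thesis
      by (intro tendsto_eventually) (auto simp: eventually_sequentially)
  qed (simp add: shell_def)
qed simp

text \<open>Local integrability only controls \<Omega> on annuli away from the origin; homogeneity makes the
  dyadic annuli 2^-(N+1) < |z| \<le> 2^-N carry geometrically decreasing mass.\<close>
lemma shell_mass_unit_finite:
  fixes \<Omega> :: "'a::euclidean_space \<Rightarrow> real"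
  assumes li: "locally_integrable_punctured \<Omega>" and hom: "homogeneous_deg0 \<Omega>"
  shows "shell_mass \<Omega> 0 1 < \<infinity>"
proof -
  have meas[measurable]: "\<Omega> \<in> borel_measurable lebesgue"
    by (rule borel_measurable_locally_integrable_punctured[OF li])
  define A where "A = cball (0::'a) 1 - ball 0 (1/2)"
  have "compact A" "0 \<notin> A" unfolding A_def by (auto intro!: compact_diff)
  then have "set_integrable lebesgue A \<Omega>"
    using li unfolding locally_integrable_punctured_def by blast
  then have "(\<integral>\<^sup>+z. ennreal (norm (indicator A z *\<^sub>R \<Omega> z)) \<partial>lebesgue) < \<infinity>"
    unfolding set_integrable_def integrable_iff_bounded by blast
  moreover have "shell_mass \<Omega> (1/2) 1 \<le> (\<integral>\<^sup>+z. ennreal (norm (indicator A z *\<^sub>R \<Omega> z)) \<partial>lebesgue)"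
    unfolding shell_mass_def by (intro nn_integral_mono) (auto simp: A_def shell_def indicator_def)
  ultimately have "shell_mass \<Omega> (1/2) 1 < \<infinity>" by simp
  moreover have "shell_mass \<Omega> 0 1 \<le> 2 * shell_mass \<Omega> (1/2) 1"
    using shell_mass_dyadic_LIMSEQ[OF meas] shell_mass_dyadic_le[OF hom meas]
    by (intro LIMSEQ_le_const2) auto
  ultimately show ?thesis by (simp add: ennreal_mult_less_top le_less_trans)
qed

lemma L1_sphere_norm_eq_shell_mass:
  fixes \<Omega> :: "'a::euclidean_space \<Rightarrow> real"
  assumes li: "locally_integrable_punctured \<Omega>" and hom: "homogeneous_deg0 \<Omega>"
  shows "L1_sphere_norm \<Omega> = real DIM('a) * enn2real (shell_mass \<Omega> 0 1)"
proof -
  have meas[measurable]: "\<Omega> \<in> borel_measurable lebesgue"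
    by (rule borel_measurable_locally_integrable_punctured[OF li])
  have [measurable]: "\<Omega> \<in> borel_measurable sphere_measure"
    by (rule borel_measurable_sphere_measure_homogeneous[OF meas hom])
  have "(\<integral>\<^sup>+x. ennreal \<bar>\<Omega> x\<bar> \<partial>sphere_measure) =
      ennreal (real DIM('a)) * (\<integral>\<^sup>+z. ennreal \<bar>\<Omega> (z /\<^sub>R norm z)\<bar> * indicator (shell 0 1) z \<partial>lebesgue)"
    by (rule nn_integral_sphere_measure) measurable
  also have "(\<lambda>z. ennreal \<bar>\<Omega> (z /\<^sub>R norm z)\<bar> * indicator (shell 0 1) z) =
      (\<lambda>z. ennreal \<bar>\<Omega> z\<bar> * indicator (shell 0 1) z)"
    using homogeneous_deg0_normalize[OF hom] by (auto simp: indicator_def shell_def fun_eq_iff)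
  finally have "(\<integral>\<^sup>+x. ennreal \<bar>\<Omega> x\<bar> \<partial>sphere_measure) = ennreal (real DIM('a)) * shell_mass \<Omega> 0 1"
    by (simp add: shell_mass_def)
  moreover have "L1_sphere_norm \<Omega> = enn2real (\<integral>\<^sup>+x. ennreal \<bar>\<Omega> x\<bar> \<partial>sphere_measure)"
    unfolding L1_sphere_norm_def by (rule integral_eq_nn_integral) auto
  ultimately show ?thesis by (simp add: enn2real_mult)
qed

lemma L1_sphere_norm_nonneg: "0 \<le> L1_sphere_norm \<Omega>"
  unfolding L1_sphere_norm_def by simp

lemma shell_mass_eq:
  fixes \<Omega> :: "'a::euclidean_space \<Rightarrow> real"
  assumes li: "locally_integrable_punctured \<Omega>" and hom: "homogeneous_deg0 \<Omega>"
    and "0 \<le> a" "a \<le> c"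
  shows "shell_mass \<Omega> a c = ennreal ((c ^ DIM('a) - a ^ DIM('a)) * L1_sphere_norm \<Omega> / DIM('a))"
proof -
  have meas[measurable]: "\<Omega> \<in> borel_measurable lebesgue"
    by (rule borel_measurable_locally_integrable_punctured[OF li])
  define k where "k = enn2real (shell_mass \<Omega> 0 1)"
  have k: "0 \<le> k" "L1_sphere_norm \<Omega> / DIM('a) = k"
    using L1_sphere_norm_eq_shell_mass[OF li hom] by (simp_all add: k_def)
  have ball_mass: "shell_mass \<Omega> 0 s = ennreal (s ^ DIM('a) * k)" if "0 \<le> s" for s
  proof (cases "s = 0")
    case True then show ?thesis by (simp add: shell_mass_empty zero_power)
  next
    case False
    then have "shell_mass \<Omega> (s * 0) (s * 1) = ennreal (s ^ DIM('a)) * shell_mass \<Omega> 0 1"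
      using that by (intro shell_mass_scale[OF hom meas]) auto
    then show ?thesis
      using shell_mass_unit_finite[OF li hom] that k
      by (simp add: k_def ennreal_mult less_top)
  qed
  have "ennreal (c ^ DIM('a) * k) = ennreal (a ^ DIM('a) * k) + shell_mass \<Omega> a c"
    using shell_mass_split[OF meas, of 0 a c] ball_mass assms(3,4) by simp
  then have "shell_mass \<Omega> a c = ennreal (c ^ DIM('a) * k) - ennreal (a ^ DIM('a) * k)"
    by (simp add: ennreal_add_diff_cancel_left)
  also have "\<dots> = ennreal ((c ^ DIM('a) - a ^ DIM('a)) * k)"
    using assms(3,4) k by (subst ennreal_minus) (auto simp: algebra_simps)
  finally show ?thesis by (metis k(2) times_divide_eq_right)
qed

lemma borel_measurable_norm_lebesgue[measurable]:
  "(\<lambda>z::'a::euclidean_space. norm z) \<in> borel_measurable lebesgue"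
  by (rule measurable_completion) simp

lemma distr_norm_density_homogeneous:
  fixes \<Omega> :: "'a::euclidean_space \<Rightarrow> real"
  assumes li: "locally_integrable_punctured \<Omega>" and hom: "homogeneous_deg0 \<Omega>" and c: "0 \<le> c"
  shows "distr (density lebesgue (\<lambda>z. ennreal \<bar>\<Omega> z\<bar> * indicator (shell 0 c) z)) borel norm =
    density lborel (\<lambda>s. ennreal (L1_sphere_norm \<Omega> * s ^ (DIM('a) - 1)) * indicator {0<..c} s)"
    (is "distr (density lebesgue ?G) borel norm = density lborel ?D")
proof -
  let ?n = "DIM('a)" and ?L = "L1_sphere_norm \<Omega>"
  have [measurable]: "\<Omega> \<in> borel_measurable lebesgue"
    by (rule borel_measurable_locally_integrable_punctured[OF li])
  \<comment> \<open>clamping x to [0, c] lets one formula describe every tail {x<..} of both measures\<close>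
  define E where "E x = (c ^ ?n - min c (max x 0) ^ ?n) * ?L / ?n" for x
  have tail_G: "emeasure (distr (density lebesgue ?G) borel norm) {x<..} = ennreal (E x)" for x
  proof -
    define u where "u = min c (max x 0)"
    have "norm -` {x<..} \<in> sets (lebesgue :: 'a measure)"
      using measurable_sets[OF borel_measurable_norm_lebesgue, of "{x<..}"] by simp
    then have "emeasure (distr (density lebesgue ?G) borel norm) {x<..} =
        (\<integral>\<^sup>+z. ?G z * indicator {x<..} (norm z) \<partial>lebesgue)"
      by (subst emeasure_distr) (auto simp: emeasure_density intro!: nn_integral_cong split: split_indicator)
    also have "\<dots> = shell_mass \<Omega> u c"
      unfolding shell_mass_def
      by (intro nn_integral_cong) (auto simp: u_def shell_def indicator_def min_less_iff_disj max_less_iff_conj)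
    also have "\<dots> = ennreal (E x)"
      unfolding E_def u_def[symmetric] using c by (intro shell_mass_eq[OF li hom]) (auto simp: u_def)
    finally show ?thesis .
  qed
  have tail_D: "emeasure (density lborel ?D) {x<..} = ennreal (E x)" for x
  proof -
    define u where "u = min c (max x 0)"
    have "emeasure (density lborel ?D) {x<..} =
        (\<integral>\<^sup>+s. ennreal (?L * s ^ (?n - 1)) * indicator {u<..c} s \<partial>lborel)"
      by (subst emeasure_density) (auto intro!: nn_integral_cong simp: u_def indicator_def)
    also have "\<dots> = ennreal ((\<lambda>s. ?L / ?n * s ^ ?n) c - (\<lambda>s. ?L / ?n * s ^ ?n) u)"
      using c L1_sphere_norm_nonneg[of \<Omega>]
      by (intro nn_integral_FTC_Ioc) (auto simp: u_def intro!: derivative_eq_intros)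
    also have "\<dots> = ennreal (E x)"
      by (simp add: E_def u_def field_simps)
    finally show ?thesis .
  qed
  show ?thesis
  proof (rule measure_eqI_lessThan)
    show "emeasure (distr (density lebesgue ?G) borel norm) {x<..} < \<infinity>" for x
      unfolding tail_G by simp
    show "emeasure (distr (density lebesgue ?G) borel norm) {x<..} = emeasure (density lborel ?D) {x<..}" for x
      unfolding tail_G tail_D ..
  qed simp_all
qed

lemma nn_integral_polar_homogeneous:
  fixes \<Omega> :: "'a::euclidean_space \<Rightarrow> real" and h :: "real \<Rightarrow> ennreal"
  assumes li: "locally_integrable_punctured \<Omega>" and hom: "homogeneous_deg0 \<Omega>"
    and c: "0 \<le> c" and [measurable]: "h \<in> borel_measurable borel"
  shows "(\<integral>\<^sup>+z. ennreal \<bar>\<Omega> z\<bar> * indicator (shell 0 c) z * h (norm z) \<partial>lebesgue) =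
    (\<integral>\<^sup>+s. ennreal (L1_sphere_norm \<Omega> * s ^ (DIM('a) - 1)) * indicator {0<..c} s * h s \<partial>lborel)"
proof -
  have [measurable]: "\<Omega> \<in> borel_measurable lebesgue"
    by (rule borel_measurable_locally_integrable_punctured[OF li])
  have "(\<integral>\<^sup>+z. ennreal \<bar>\<Omega> z\<bar> * indicator (shell 0 c) z * h (norm z) \<partial>lebesgue) =
      (\<integral>\<^sup>+s. h s \<partial>distr (density lebesgue (\<lambda>z. ennreal \<bar>\<Omega> z\<bar> * indicator (shell 0 c) z)) borel norm)"
    by (simp add: nn_integral_density nn_integral_distr)
  then show ?thesis
    by (simp add: distr_norm_density_homogeneous[OF li hom c] nn_integral_density mult.assoc)
qed

lemma nn_integral_shell_powr:
  fixes \<Omega> :: "'a::euclidean_space \<Rightarrow> real" and \<rho> :: real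
  assumes li: "locally_integrable_punctured \<Omega>" and hom: "homogeneous_deg0 \<Omega>"
    and \<rho>: "\<rho> \<noteq> 0" and a: "0 < a" "a \<le> m"
  shows "(\<integral>\<^sup>+z. ennreal \<bar>\<Omega> z\<bar> * indicator (shell a m) z * ennreal (norm z powr (\<rho> - real DIM('a))) \<partial>lebesgue) =
    ennreal (L1_sphere_norm \<Omega> * (m powr \<rho> - a powr \<rho>) / \<rho>)"
proof -
  let ?n = "DIM('a)" and ?L = "L1_sphere_norm \<Omega>"
  define h where "h s = indicator {a<..m} s * ennreal (s powr (\<rho> - real ?n))" for s :: real
  have [measurable]: "h \<in> borel_measurable borel" unfolding h_def by measurable
  have "(\<integral>\<^sup>+z. ennreal \<bar>\<Omega> z\<bar> * indicator (shell a m) z * ennreal (norm z powr (\<rho> - real ?n)) \<partial>lebesgue) =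
      (\<integral>\<^sup>+z. ennreal \<bar>\<Omega> z\<bar> * indicator (shell 0 m) z * h (norm z) \<partial>lebesgue)"
    using a by (intro nn_integral_cong) (auto simp: h_def shell_def indicator_def)
  also have "\<dots> = (\<integral>\<^sup>+s. ennreal (?L * s ^ (?n - 1)) * indicator {0<..m} s * h s \<partial>lborel)"
    using a by (intro nn_integral_polar_homogeneous[OF li hom]) auto
  also have "\<dots> = (\<integral>\<^sup>+s. ennreal (?L * s powr (\<rho> - 1)) * indicator {a<..m} s \<partial>lborel)"
  proof (intro nn_integral_cong)
    fix s :: real
    have "s ^ (?n - 1) * s powr (\<rho> - real ?n) = s powr (\<rho> - 1)" if "0 < s"
      using that by (simp add: powr_realpow[symmetric] powr_add[symmetric] of_nat_diff DIM_positive)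
    then show "ennreal (?L * s ^ (?n - 1)) * indicator {0<..m} s * h s =
        ennreal (?L * s powr (\<rho> - 1)) * indicator {a<..m} s"
      using a L1_sphere_norm_nonneg[of \<Omega>]
      by (auto simp: h_def indicator_def ennreal_mult'[symmetric] mult.assoc)
  qed
  also have "\<dots> = ennreal ((\<lambda>s. ?L * s powr \<rho> / \<rho>) m - (\<lambda>s. ?L * s powr \<rho> / \<rho>) a)"
    using a \<rho> L1_sphere_norm_nonneg[of \<Omega>]
    by (intro nn_integral_FTC_Ioc) (auto intro!: derivative_eq_intros simp: field_simps)
  finally show ?thesis by (simp add: diff_divide_distrib right_diff_distrib)
qed

section \<open>The Marcinkiewicz integral of a bounded function with separated support\<close>

lemma abs_F_rho_le_shell_integral:
  fixes \<Omega> b :: "'a::euclidean_space \<Rightarrow> real"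
  assumes [measurable]: "\<Omega> \<in> borel_measurable lebesgue"
    and b_support: "\<And>y. y \<notin> B \<Longrightarrow> b y = 0" and b_bound: "AE y in lebesgue. \<bar>b y\<bar> \<le> L"
    and L: "0 \<le> L" and dist: "\<And>y. y \<in> B \<Longrightarrow> a < norm (x - y) \<and> norm (x - y) \<le> c"
  shows "ennreal \<bar>F_rho \<rho> \<Omega> b t x\<bar> \<le> ennreal L *
    (\<integral>\<^sup>+z. ennreal \<bar>\<Omega> z\<bar> * indicator (shell a (min t c)) z * ennreal (norm z powr (\<rho> - real DIM('a))) \<partial>lebesgue)"
proof -
  define f where "f y = indicator (cball x t) y *\<^sub>R (\<Omega> (x - y) * norm (x - y) powr (\<rho> - real DIM('a)) * b y)" for y
  define g where "g z = ennreal \<bar>\<Omega> z\<bar> * indicator (shell a (min t c)) z * ennreal (norm z powr (\<rho> - real DIM('a)))" for z :: 'a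
  have [measurable]: "g \<in> borel_measurable lebesgue" unfolding g_def by measurable
  have F_eq: "F_rho \<rho> \<Omega> b t x = (\<integral>y. f y \<partial>lebesgue)"
    unfolding F_rho_def set_lebesgue_integral_def f_def[abs_def] ..
  have "ennreal \<bar>F_rho \<rho> \<Omega> b t x\<bar> \<le> (\<integral>\<^sup>+y. ennreal (norm (f y)) \<partial>lebesgue)"
  proof (cases "integrable lebesgue f")
    case True
    then show ?thesis using integral_norm_bound_ennreal[OF True] by (simp add: F_eq)
  qed (simp add: F_eq not_integrable_integral_eq)
  also have "\<dots> \<le> (\<integral>\<^sup>+y. ennreal L * g (x - y) \<partial>lebesgue)"
  proof (intro nn_integral_mono_AE, use b_bound in eventually_elim)
    fix y assume b_y: "\<bar>b y\<bar> \<le> L"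
    show "ennreal (norm (f y)) \<le> ennreal L * g (x - y)"
    proof (cases "y \<in> cball x t \<and> y \<in> B")
      case True
      then have "x - y \<in> shell a (min t c)"
        using dist[of y] by (auto simp: shell_def dist_norm)
      then have "ennreal L * g (x - y) = ennreal (\<bar>\<Omega> (x - y)\<bar> * norm (x - y) powr (\<rho> - real DIM('a)) * L)"
        using L by (simp add: g_def mult.commute flip: ennreal_mult)
      moreover have "norm (f y) \<le> \<bar>\<Omega> (x - y)\<bar> * norm (x - y) powr (\<rho> - real DIM('a)) * L"
        using True b_y by (simp add: f_def abs_mult mult_left_mono)
      ultimately show ?thesis by (simp add: ennreal_leI)
    qed (auto simp: f_def b_support)
  qed
  also have "\<dots> = ennreal L * (\<integral>\<^sup>+z. g z \<partial>lebesgue)"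
    using nn_integral_lebesgue_affine[of "\<lambda>z. ennreal L * g z" "-1" x]
    by (simp add: nn_integral_cmult)
  finally show ?thesis by (simp add: g_def)
qed

lemma abs_F_rho_le:
  fixes \<Omega> b :: "'a::euclidean_space \<Rightarrow> real"
  assumes li: "locally_integrable_punctured \<Omega>" and hom: "homogeneous_deg0 \<Omega>"
    and \<rho>: "0 < \<rho>" and a: "0 < a"
    and b_support: "\<And>y. y \<notin> B \<Longrightarrow> b y = 0" and b_bound: "AE y in lebesgue. \<bar>b y\<bar> \<le> L"
    and L: "0 \<le> L" and dist: "\<And>y. y \<in> B \<Longrightarrow> a < norm (x - y) \<and> norm (x - y) \<le> c"
  shows "\<bar>F_rho \<rho> \<Omega> b t x\<bar> \<le> L * L1_sphere_norm \<Omega> / \<rho> * max 0 (min t c powr \<rho> - a powr \<rho>)"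
proof -
  define m where "m = min t c"
  have F_le: "ennreal \<bar>F_rho \<rho> \<Omega> b t x\<bar> \<le> ennreal L *
    (\<integral>\<^sup>+z. ennreal \<bar>\<Omega> z\<bar> * indicator (shell a m) z * ennreal (norm z powr (\<rho> - real DIM('a))) \<partial>lebesgue)"
    unfolding m_def using borel_measurable_locally_integrable_punctured[OF li] b_support b_bound L dist
    by (rule abs_F_rho_le_shell_integral)
  have L1: "0 \<le> L1_sphere_norm \<Omega>" by (rule L1_sphere_norm_nonneg)
  show ?thesis
  proof (cases "a < m")
    case True
    then have D: "max 0 (m powr \<rho> - a powr \<rho>) = m powr \<rho> - a powr \<rho>"
      using a \<rho> by (simp add: powr_mono2)
    have "ennreal \<bar>F_rho \<rho> \<Omega> b t x\<bar> \<le> ennreal L * ennreal (L1_sphere_norm \<Omega> * (m powr \<rho> - a powr \<rho>) / \<rho>)"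
      using F_le nn_integral_shell_powr[OF li hom _ a, of \<rho> m] True \<rho> by simp
    also have "\<dots> = ennreal (L * (L1_sphere_norm \<Omega> * (m powr \<rho> - a powr \<rho>) / \<rho>))"
      using L by (rule ennreal_mult'[symmetric])
    finally have "\<bar>F_rho \<rho> \<Omega> b t x\<bar> \<le> L * (L1_sphere_norm \<Omega> * (m powr \<rho> - a powr \<rho>) / \<rho>)"
      using L L1 \<rho> D by (subst (asm) ennreal_le_iff) (auto simp: max_def split: if_splits)
    then show ?thesis by (simp add: m_def[symmetric] D)
  next
    case False
    then have "\<bar>F_rho \<rho> \<Omega> b t x\<bar> = 0"
      using F_le by (simp add: shell_empty)
    then show ?thesis using L L1 \<rho> by simp
  qed
qed

lemma
  fixes b :: "'a::euclidean_space \<Rightarrow> real"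
  assumes "AE y in lebesgue. \<bar>b y\<bar> \<le> C"
  shows Linf_norm_nonneg: "0 \<le> Linf_norm b"
    and AE_abs_le_Linf_norm: "AE y in lebesgue. \<bar>b y\<bar> \<le> Linf_norm b"
proof -
  define S where "S = {C. C \<ge> 0 \<and> (AE x in lebesgue. \<bar>b x\<bar> \<le> C)}"
  have "max C 0 \<in> S" unfolding S_def using assms by (auto elim: eventually_mono)
  then have S: "S \<noteq> {}" by auto
  have Linf: "Linf_norm b = Inf S" unfolding Linf_norm_def S_def ..
  show "0 \<le> Linf_norm b" unfolding Linf using S by (intro cInf_greatest) (auto simp: S_def)
  have "AE y in lebesgue. \<bar>b y\<bar> \<le> Linf_norm b + inverse (real (Suc m))" for m
  proof -
    obtain C' where "C' \<in> S" "C' < Linf_norm b + inverse (real (Suc m))"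
      using cInf_lessD[OF S, of "Linf_norm b + inverse (real (Suc m))"] unfolding Linf by auto
    then show ?thesis unfolding S_def by (auto elim: eventually_mono)
  qed
  then have "AE y in lebesgue. \<forall>m. \<bar>b y\<bar> \<le> Linf_norm b + inverse (real (Suc m))"
    by (simp add: AE_all_countable)
  then show "AE y in lebesgue. \<bar>b y\<bar> \<le> Linf_norm b"
  proof eventually_elim
    case (elim y)
    show ?case
    proof (rule ccontr)
      assume "\<not> ?case"
      then obtain m where "inverse (real (Suc m)) < \<bar>b y\<bar> - Linf_norm b"
        using reals_Archimedean[of "\<bar>b y\<bar> - Linf_norm b"] by auto
      moreover have "\<bar>b y\<bar> \<le> Linf_norm b + inverse (real (Suc m))" using elim ..
      ultimately show False by linarith
    qed
  qed
qed

lemma multiple_of_phi_atomD: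
  assumes "multiple_of_phi_atom \<phi> s B b"
  shows "\<And>y. y \<notin> B \<Longrightarrow> b y = 0" and "\<exists>C. AE y in lebesgue. \<bar>b y\<bar> \<le> C"
proof -
  obtain c a where atom: "phi_atom \<phi> s B a" and b: "b = (\<lambda>x. c * a x)"
    using assms unfolding multiple_of_phi_atom_def by blast
  then show "\<And>y. y \<notin> B \<Longrightarrow> b y = 0" by (simp add: phi_atom_def)
  have "AE y in lebesgue. \<bar>a y\<bar> \<le> 1 / L_phi_norm \<phi> (indicator B)"
    using atom by (simp add: phi_atom_def)
  then have "AE y in lebesgue. \<bar>b y\<bar> \<le> \<bar>c\<bar> * (1 / L_phi_norm \<phi> (indicator B))"
  proof eventually_elim
    case (elim y)
    show ?case unfolding b abs_mult by (rule mult_left_mono[OF elim abs_ge_zero])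
  qed
  then show "\<exists>C. AE y in lebesgue. \<bar>b y\<bar> \<le> C" ..
qed

lemma truncated_powr_square_le:
  assumes \<rho>: "0 < \<rho>" and a: "0 < a" "a \<le> c" and t: "0 < t"
    and y: "\<bar>y\<bar> \<le> M * max 0 (min t c powr \<rho> - a powr \<rho>)"
  shows "ennreal (y\<^sup>2 * t powr (- 2 * \<rho> - 1)) \<le>
    ennreal (M\<^sup>2) * (ennreal (1 / t) * indicator {a<..c} t) +
    ennreal (M\<^sup>2 * (c powr \<rho> - a powr \<rho>)\<^sup>2) * (ennreal (t powr (- (2 * \<rho>) - 1)) * indicator {c<..} t)"
proof -
  have "y\<^sup>2 \<le> (M * max 0 (min t c powr \<rho> - a powr \<rho>))\<^sup>2"
    using power_mono[OF y abs_ge_zero, of 2] by simp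
  then have y2: "y\<^sup>2 * t powr (- 2 * \<rho> - 1) \<le> M\<^sup>2 * (max 0 (min t c powr \<rho> - a powr \<rho>))\<^sup>2 * t powr (- 2 * \<rho> - 1)"
    by (simp add: mult_right_mono power_mult_distrib)
  consider "t \<le> a" | "a < t" "t \<le> c" | "c < t" by linarith
  then show ?thesis
  proof cases
    case 1
    then have "min t c powr \<rho> \<le> a powr \<rho>" using t \<rho> a by (intro powr_mono2) auto
    then have "y = 0" using y by (simp add: max_absorb1)
    then show ?thesis by simp
  next
    case 2
    have "max 0 (t powr \<rho> - a powr \<rho>) \<le> t powr \<rho>" using a by simp
    then have "(max 0 (t powr \<rho> - a powr \<rho>))\<^sup>2 * t powr (- 2 * \<rho> - 1) \<le> (t powr \<rho>)\<^sup>2 * t powr (- 2 * \<rho> - 1)"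
      by (intro mult_right_mono power_mono) auto
    also have "\<dots> = 1 / t"
      using t by (simp add: power2_eq_square powr_add[symmetric] powr_minus_divide)
    finally have "y\<^sup>2 * t powr (- 2 * \<rho> - 1) \<le> M\<^sup>2 * (1 / t)"
      using y2 2 by (smt (verit) mult_left_mono zero_le_power2 mult.assoc)
    then show ?thesis using 2 t
      by (simp add: indicator_def ennreal_mult'[symmetric] ennreal_power[symmetric] ennreal_leI)
  next
    case 3
    have "max 0 (min t c powr \<rho> - a powr \<rho>) = c powr \<rho> - a powr \<rho>"
      using 3 a \<rho> by (simp add: powr_mono2)
    then have "y\<^sup>2 * t powr (- 2 * \<rho> - 1) \<le> M\<^sup>2 * (c powr \<rho> - a powr \<rho>)\<^sup>2 * t powr (- 2 * \<rho> - 1)"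
      using y2 by simp
    then show ?thesis using 3
      by (simp add: indicator_def ennreal_mult'[symmetric] ennreal_leI)
  qed
qed

lemma nn_integral_truncated_powr_square_le:
  fixes F :: "real \<Rightarrow> real"
  assumes \<rho>: "0 < \<rho>" and a: "0 < a" "a \<le> c"
    and F: "\<And>t. 0 < t \<Longrightarrow> \<bar>F t\<bar> \<le> M * max 0 (min t c powr \<rho> - a powr \<rho>)"
  shows "(\<integral>\<^sup>+t\<in>{0<..}. ennreal ((F t)\<^sup>2 * t powr (- 2 * \<rho> - 1)) \<partial>lborel) \<le>
    ennreal (M\<^sup>2 * (ln (c / a) + (c powr \<rho> - a powr \<rho>)\<^sup>2 / (2 * \<rho> * c powr (2 * \<rho>))))"
proof -
  define D where "D = c powr \<rho> - a powr \<rho>"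
  have "ennreal ((F t)\<^sup>2 * t powr (- 2 * \<rho> - 1)) * indicator {0<..} t \<le>
      ennreal (M\<^sup>2) * (ennreal (1 / t) * indicator {a<..c} t) +
      ennreal (M\<^sup>2 * D\<^sup>2) * (ennreal (t powr (- (2 * \<rho>) - 1)) * indicator {c<..} t)" for t
    unfolding D_def using truncated_powr_square_le[OF \<rho> a _ F] by (cases "0 < t") auto
  then have "(\<integral>\<^sup>+t\<in>{0<..}. ennreal ((F t)\<^sup>2 * t powr (- 2 * \<rho> - 1)) \<partial>lborel) \<le>
      ennreal (M\<^sup>2) * (\<integral>\<^sup>+t. ennreal (1 / t) * indicator {a<..c} t \<partial>lborel) +
      ennreal (M\<^sup>2 * D\<^sup>2) * (\<integral>\<^sup>+t. ennreal (t powr (- (2 * \<rho>) - 1)) * indicator {c<..} t \<partial>lborel)"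
    by (subst nn_integral_cmult[symmetric] nn_integral_add[symmetric], simp_all)+
      (intro nn_integral_mono)
  also have "\<dots> = ennreal (M\<^sup>2 * (ln c - ln a) + M\<^sup>2 * D\<^sup>2 * (c powr (- (2 * \<rho>)) / (2 * \<rho>)))"
    using a \<rho> by (simp add: nn_integral_inverse_Ioc nn_integral_powr_Ioi ennreal_mult'[symmetric]
        ennreal_power[symmetric] ennreal_plus[symmetric] del: ennreal_plus)
  also have "\<dots> = ennreal (M\<^sup>2 * (ln (c / a) + D\<^sup>2 / (2 * \<rho> * c powr (2 * \<rho>))))"
    using a by (simp add: ln_div powr_minus_divide field_simps)
  finally show ?thesis by (simp add: D_def)
qed

lemma mu_rho_le_sqrt:
  assumes "(\<integral>\<^sup>+t\<in>{0<..}. ennreal ((F_rho \<rho> \<Omega> f t x)\<^sup>2 * t powr (- 2 * \<rho> - 1)) \<partial>lborel) \<le> ennreal C"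
  shows "mu_rho \<rho> \<Omega> f x \<le> ennreal (sqrt C)"
proof -
  define I where "I = (\<integral>\<^sup>+t\<in>{0<..}. ennreal ((F_rho \<rho> \<Omega> f t x)\<^sup>2 * t powr (- 2 * \<rho> - 1)) \<partial>lborel)"
  have finite: "I \<noteq> \<infinity>" using assms by (auto simp: I_def top_unique)
  have "enn2real I \<le> max 0 C"
    using enn2real_mono[OF assms[folded I_def]] by (cases "0 \<le> C") (auto simp: ennreal_neg)
  then have "ennreal (sqrt (enn2real I)) \<le> ennreal (sqrt (max 0 C))"
    by (intro ennreal_leI real_sqrt_le_mono)
  also have "\<dots> = ennreal (sqrt C)"
    by (cases "0 \<le> C") (auto simp: ennreal_neg)
  finally show ?thesis
    using finite unfolding mu_rho_def I_def[symmetric] Let_def by simp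
qed

theorem lemma4p8:
  fixes \<Omega> :: "'a::euclidean_space \<Rightarrow> real"
    and \<phi> :: "'a \<Rightarrow> real \<Rightarrow> real"
    and s :: nat and \<rho> r R :: real and b :: "'a \<Rightarrow> real" and x :: 'a
  assumes "DIM('a) \<ge> 2"
    and "\<rho> > 0"
    and "locally_integrable_punctured \<Omega>"
    and "homogeneous_deg0 \<Omega>"
    and "integral\<^sup>L sphere_measure \<Omega> = 0"
    and "admissible_infty \<phi> s"
    and "r > 0"
    and "multiple_of_phi_atom \<phi> s (ball 0 r) b"
    and "R \<ge> 2 * r"
    and "x \<in> ball 0 (2 * R) - ball 0 R"
  shows "mu_rho \<rho> \<Omega> b x \<le> ennreal (L1_sphere_norm \<Omega> * Linf_norm b * (1 / \<rho>) *
           sqrt (ln ((2 * R + r) / (R - r)) +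
                 ((2 * R + r) powr \<rho> - (R - r) powr \<rho>)\<^sup>2 / (2 * \<rho> * (2 * R + r) powr (2 * \<rho>))))"
proof -
  obtain C where support: "\<And>y. y \<notin> ball 0 r \<Longrightarrow> b y = 0" and bound: "AE y in lebesgue. \<bar>b y\<bar> \<le> C"
    using multiple_of_phi_atomD[OF assms(8)] by blast
  note Linf = Linf_norm_nonneg[OF bound] AE_abs_le_Linf_norm[OF bound]
  have dist: "R - r < norm (x - y) \<and> norm (x - y) \<le> 2 * R + r" if "y \<in> ball 0 r" for y
    using that assms(10) norm_triangle_ineq2[of x y] norm_triangle_ineq4[of x y] by auto
  define M where "M = L1_sphere_norm \<Omega> * Linf_norm b * (1 / \<rho>)"
  define Q where "Q = ln ((2 * R + r) / (R - r)) +
    ((2 * R + r) powr \<rho> - (R - r) powr \<rho>)\<^sup>2 / (2 * \<rho> * (2 * R + r) powr (2 * \<rho>))"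
  have "\<bar>F_rho \<rho> \<Omega> b t x\<bar> \<le> M * max 0 (min t (2 * R + r) powr \<rho> - (R - r) powr \<rho>)" for t
    using abs_F_rho_le[where a = "R - r" and B = "ball 0 r", OF assms(3,4,2) _ support Linf(2,1) dist] assms(7,9)
    by (simp add: M_def mult_ac)
  then have "mu_rho \<rho> \<Omega> b x \<le> ennreal (sqrt (M\<^sup>2 * Q))"
    unfolding Q_def using assms(2,7,9) by (intro mu_rho_le_sqrt nn_integral_truncated_powr_square_le) auto
  also have "sqrt (M\<^sup>2 * Q) = M * sqrt Q"
    using Linf assms(2) L1_sphere_norm_nonneg[of \<Omega>] by (simp add: M_def real_sqrt_mult)
  finally show ?thesis unfolding M_def Q_def .
qed

end
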